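(* Let $k$ be a positive integer and let $D$ be a digraph of order $n$ with no isolated vertex and maximum out-degree $\Delta^+$. Then $\gamma_{trk}(D)\ge\left\lceil\frac{kn+1}{\Delta^++k}\right\rceil$, and this bound is sharp.
   Context: All digraphs are finite, with no loops or multiple arcs (pairs of opposite arcs are allowed). $N^-(v)$ denotes the set of in-neighbors of $v$. A vertex is isolated if it has no in-neighbor and no out-neighbor. For a positive integer $k$, a $k$-rainbow dominating function ($k$RDF) on $D$ is a function $f:V(D)\to\mathcal P(\{1,\dots,k\})$ such that every $v$ with $f(v)=\emptyset$ satisfies $\bigcup_{u\in N^-(v)}f(u)=\{1,\dots,k\}$; its weight is $\omega(f)=\sum_v|f(v)|$. If $D$ has no isolated vertex, a total $k$RDF (T$k$RDF) is a $k$RDF $f$ such that the subdigraph induced by $\{v:f(v)\ne\emptyset\}$ has no isolated vertex; $\gamma_{trk}(D)$ is the minimum weight of a T$k$RDF. *)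

theory Defs
  imports Complex_Main
begin

text \<open>A digraph: finite vertex set V, arc set A \<subseteq> V \<times> V, no loops
  (pairs of opposite arcs allowed; multiple arcs impossible as A is a set).\<close>
definition digraph :: "'a set \<Rightarrow> ('a \<times> 'a) set \<Rightarrow> bool" where
  "digraph V A \<longleftrightarrow> finite V \<and> A \<subseteq> V \<times> V \<and> (\<forall>v. (v, v) \<notin> A)"

definition in_nbrs :: "('a \<times> 'a) set \<Rightarrow> 'a \<Rightarrow> 'a set" where
  "in_nbrs A v = {u. (u, v) \<in> A}"

definition out_degree :: "('a \<times> 'a) set \<Rightarrow> 'a \<Rightarrow> nat" where
  "out_degree A v = card {w. (v, w) \<in> A}"

definition max_out_degree :: "'a set \<Rightarrow> ('a \<times> 'a) set \<Rightarrow> nat" where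
  "max_out_degree V A = Max (out_degree A ` V)"

definition isolated_in :: "'a set \<Rightarrow> ('a \<times> 'a) set \<Rightarrow> 'a \<Rightarrow> bool" where
  "isolated_in S A v \<longleftrightarrow> (\<forall>u\<in>S. (u, v) \<notin> A \<and> (v, u) \<notin> A)"

definition no_isolated :: "'a set \<Rightarrow> ('a \<times> 'a) set \<Rightarrow> bool" where
  "no_isolated V A \<longleftrightarrow> (\<forall>v\<in>V. \<not> isolated_in V A v)"

definition kRDF :: "nat \<Rightarrow> 'a set \<Rightarrow> ('a \<times> 'a) set \<Rightarrow> ('a \<Rightarrow> nat set) \<Rightarrow> bool" where
  "kRDF k V A f \<longleftrightarrow>
     (\<forall>v\<in>V. f v \<subseteq> {1..k}) \<and> (\<forall>v. v \<notin> V \<longrightarrow> f v = {}) \<and>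
     (\<forall>v\<in>V. f v = {} \<longrightarrow> (\<Union>u\<in>in_nbrs A v. f u) = {1..k})"

definition weight :: "'a set \<Rightarrow> ('a \<Rightarrow> nat set) \<Rightarrow> nat" where
  "weight V f = (\<Sum>v\<in>V. card (f v))"

definition TkRDF :: "nat \<Rightarrow> 'a set \<Rightarrow> ('a \<times> 'a) set \<Rightarrow> ('a \<Rightarrow> nat set) \<Rightarrow> bool" where
  "TkRDF k V A f \<longleftrightarrow> kRDF k V A f \<and>
     no_isolated {v\<in>V. f v \<noteq> {}} A"

definition gamma_trk :: "nat \<Rightarrow> 'a set \<Rightarrow> ('a \<times> 'a) set \<Rightarrow> nat" where
  "gamma_trk k V A = Min {weight V f | f. TkRDF k V A f}"

end

theory Submission
  imports Defs
begin

text \<open>Let \<open>P\<close> be the set of coloured vertices and \<open>Z\<close> the set of uncoloured ones.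
  Every \<open>v \<in> Z\<close> needs in-neighbours carrying all \<open>k\<close> colours, so counting each colour
  of a vertex \<open>u \<in> P\<close> once for each out-neighbour of \<open>u\<close> in \<open>Z\<close> gives
  \<open>k |Z| \<le> \<Delta>\<^sup>+ \<omega>(f)\<close>. Totality makes this strict: some \<open>u \<in> P\<close> has an
  out-neighbour in \<open>P\<close>, hence fewer than \<open>\<Delta>\<^sup>+\<close> out-neighbours in \<open>Z\<close>. Together with
  \<open>|P| \<le> \<omega>(f)\<close> this yields \<open>k n + 1 \<le> (\<Delta>\<^sup>+ + k) \<omega>(f)\<close>. The directed 2-cycle,
  where both vertices must be coloured, attains the bound.\<close>

lemma kRDF_card_le:
  assumes "kRDF k V A f"
  shows "card (f v) \<le> k"
  using assms card_mono[of "{1..k}" "f v"] by (cases "v \<in> V") (auto simp: kRDF_def)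

lemma kRDF_finite:
  assumes "kRDF k V A f"
  shows "finite (f v)"
  using assms by (cases "v \<in> V") (auto simp: kRDF_def intro: finite_subset)

lemma kRDF_weight_le:
  assumes "kRDF k V A f"
  shows "weight V f \<le> k * card V"
proof -
  have "weight V f \<le> (\<Sum>v\<in>V. k)"
    unfolding weight_def using kRDF_card_le[OF assms] by (rule sum_mono)
  then show ?thesis by (simp add: mult.commute)
qed

lemma weight_eq_sum_support:
  assumes "finite V"
  shows "weight V f = (\<Sum>u\<in>{u\<in>V. f u \<noteq> {}}. card (f u))"
  unfolding weight_def using assms by (intro sum.mono_neutral_right) auto

lemma card_support_le_weight:
  assumes "finite V" and "kRDF k V A f"
  shows "card {u\<in>V. f u \<noteq> {}} \<le> weight V f"
proof -
  have "card {u\<in>V. f u \<noteq> {}} = (\<Sum>u\<in>{u\<in>V. f u \<noteq> {}}. 1)" by simp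
  also have "\<dots> \<le> (\<Sum>u\<in>{u\<in>V. f u \<noteq> {}}. card (f u))"
    using kRDF_finite[OF assms(2)] by (intro sum_mono) (auto simp: Suc_le_eq card_gt_0_iff)
  finally show ?thesis using weight_eq_sum_support[OF assms(1)] by simp
qed

lemma kRDF_support_nonempty:
  assumes "k > 0" and "V \<noteq> {}" and "kRDF k V A f"
  shows "\<exists>v\<in>V. f v \<noteq> {}"
proof (rule ccontr)
  assume "\<not> (\<exists>v\<in>V. f v \<noteq> {})"
  then have "f v = {}" for v
    using assms(3) by (cases "v \<in> V") (auto simp: kRDF_def)
  moreover obtain v where "v \<in> V" using assms(2) by blast
  ultimately have "{1..k} = {}"
    using assms(3) by (auto simp: kRDF_def)
  then show False using assms(1) by simp
qed

lemma TkRDF_support_has_arc: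
  assumes "k > 0" and "V \<noteq> {}" and "TkRDF k V A f"
  obtains w y where "w \<in> V" "f w \<noteq> {}" "y \<in> V" "f y \<noteq> {}" "(w, y) \<in> A"
proof -
  obtain u where u: "u \<in> V" "f u \<noteq> {}"
    using kRDF_support_nonempty[OF assms(1,2)] assms(3) unfolding TkRDF_def by blast
  then obtain x where "x \<in> V" "f x \<noteq> {}" "(x, u) \<in> A \<or> (u, x) \<in> A"
    using assms(3) by (auto simp: TkRDF_def no_isolated_def isolated_in_def)
  then show ?thesis using u that by blast
qed

lemma kRDF_in_nbrs_weight_ge:
  assumes "digraph V A" and "kRDF k V A f" and "v \<in> V" and "f v = {}"
  shows "k \<le> (\<Sum>u\<in>{u\<in>V. f u \<noteq> {} \<and> (u, v) \<in> A}. card (f u))"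
proof -
  have fin: "finite V" and AV: "A \<subseteq> V \<times> V" using assms(1) by (auto simp: digraph_def)
  have fin_in: "finite (in_nbrs A v)"
    using AV by (intro finite_subset[OF _ fin]) (auto simp: in_nbrs_def)
  have "k = card (\<Union>u\<in>in_nbrs A v. f u)"
    using assms(2-4) by (simp add: kRDF_def)
  also have "\<dots> \<le> (\<Sum>u\<in>in_nbrs A v. card (f u))"
    using fin_in by (rule card_UN_le)
  also have "\<dots> = (\<Sum>u\<in>{u\<in>V. f u \<noteq> {} \<and> (u, v) \<in> A}. card (f u))"
    using fin_in AV by (intro sum.mono_neutral_right) (auto simp: in_nbrs_def)
  finally show ?thesis .
qed

lemma kRDF_double_count:
  assumes "digraph V A" and "kRDF k V A f"
  shows "k * card {v\<in>V. f v = {}}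
           \<le> (\<Sum>u\<in>{u\<in>V. f u \<noteq> {}}. card (f u) * card {v\<in>V. f v = {} \<and> (u, v) \<in> A})"
proof -
  have fin: "finite V" using assms(1) by (simp add: digraph_def)
  have "k * card {v\<in>V. f v = {}} = (\<Sum>v\<in>{v\<in>V. f v = {}}. k)" by simp
  also have "\<dots> \<le> (\<Sum>v\<in>{v\<in>V. f v = {}}. \<Sum>u\<in>{u\<in>{u\<in>V. f u \<noteq> {}}. (u, v) \<in> A}. card (f u))"
    using kRDF_in_nbrs_weight_ge[OF assms] by (intro sum_mono) (simp add: conj_assoc)
  also have "\<dots> = (\<Sum>u\<in>{u\<in>V. f u \<noteq> {}}. \<Sum>v\<in>{v\<in>{v\<in>V. f v = {}}. (u, v) \<in> A}. card (f u))"
    using fin by (intro sum.swap_restrict[symmetric]) auto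
  also have "\<dots> = (\<Sum>u\<in>{u\<in>V. f u \<noteq> {}}. card (f u) * card {v\<in>V. f v = {} \<and> (u, v) \<in> A})"
    by (simp add: conj_assoc mult.commute)
  finally show ?thesis .
qed

lemma out_degree_le_max_out_degree:
  assumes "finite V" and "u \<in> V"
  shows "out_degree A u \<le> max_out_degree V A"
  using assms by (simp add: max_out_degree_def)

lemma finite_out_nbrs:
  assumes "digraph V A"
  shows "finite {v. (u, v) \<in> A}"
proof (rule finite_subset)
  show "{v. (u, v) \<in> A} \<subseteq> V" and "finite V" using assms by (auto simp: digraph_def)
qed

lemma card_out_nbrs_le_out_degree:
  assumes "digraph V A"
  shows "card {v\<in>S. (u, v) \<in> A} \<le> out_degree A u"
  unfolding out_degree_def using finite_out_nbrs[OF assms] by (rule card_mono) blast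

lemma card_out_nbrs_less_out_degree:
  assumes "digraph V A" and "(u, y) \<in> A" and "y \<notin> S"
  shows "card {v\<in>S. (u, v) \<in> A} < out_degree A u"
proof -
  have "{v\<in>S. (u, v) \<in> A} \<subset> {v. (u, v) \<in> A}" using assms(2,3) by blast
  then show ?thesis
    unfolding out_degree_def using finite_out_nbrs[OF assms(1)] by (rule psubset_card_mono[rotated])
qed

lemma TkRDF_weight_lower_bound:
  assumes "k > 0" and "digraph V A" and "V \<noteq> {}" and "TkRDF k V A f"
  shows "k * card V + 1 \<le> (max_out_degree V A + k) * weight V f"
proof -
  define P where "P = {u\<in>V. f u \<noteq> {}}"
  define Z where "Z = {v\<in>V. f v = {}}"
  define \<Delta> where "\<Delta> = max_out_degree V A"
  define c where "c u = card {v\<in>Z. (u, v) \<in> A}" for u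
  have fin: "finite V" using assms(2) by (simp add: digraph_def)
  have f: "kRDF k V A f" using assms(4) by (simp add: TkRDF_def)
  have c_le: "c u \<le> \<Delta>" if "u \<in> V" for u
    unfolding c_def \<Delta>_def
    using card_out_nbrs_le_out_degree[OF assms(2)] out_degree_le_max_out_degree[OF fin that]
    by (rule le_trans)
  obtain w y where "w \<in> V" "f w \<noteq> {}" "y \<in> V" "f y \<noteq> {}" and wy: "(w, y) \<in> A"
    by (rule TkRDF_support_has_arc[OF assms(1,3,4)])
  then have w: "w \<in> P" and y: "y \<in> P" by (simp_all add: P_def)
  have c_less: "c w < \<Delta>"
  proof -
    have "y \<notin> Z" using y by (simp add: P_def Z_def)
    with assms(2) wy have "c w < out_degree A w"
      unfolding c_def by (rule card_out_nbrs_less_out_degree)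
    also have "\<dots> \<le> \<Delta>" using w fin by (simp add: P_def \<Delta>_def out_degree_le_max_out_degree)
    finally show ?thesis .
  qed
  have "{v\<in>V. f v = {} \<and> (u, v) \<in> A} = {v\<in>Z. (u, v) \<in> A}" for u
    by (auto simp: Z_def)
  then have "k * card Z \<le> (\<Sum>u\<in>P. card (f u) * c u)"
    using kRDF_double_count[OF assms(2) f] by (simp add: P_def Z_def c_def)
  also have "\<dots> < (\<Sum>u\<in>P. card (f u) * \<Delta>)"
  proof (rule sum_strict_mono_ex1)
    show "finite P" using fin by (simp add: P_def)
    show "\<forall>u\<in>P. card (f u) * c u \<le> card (f u) * \<Delta>"
      using c_le by (simp add: P_def)
    have "card (f w) > 0" using w kRDF_finite[OF f] by (simp add: P_def card_gt_0_iff)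
    then show "\<exists>u\<in>P. card (f u) * c u < card (f u) * \<Delta>"
      using w c_less by auto
  qed
  also have "\<dots> = \<Delta> * weight V f"
    by (simp add: weight_eq_sum_support[OF fin] P_def sum_distrib_left mult.commute)
  finally have "k * card Z < \<Delta> * weight V f" .
  moreover have "card V = card P + card Z"
  proof -
    have "V = P \<union> Z" and "P \<inter> Z = {}" by (auto simp: P_def Z_def)
    then show ?thesis using fin by (simp add: card_Un_disjoint)
  qed
  moreover have "k * card P \<le> k * weight V f"
    using card_support_le_weight[OF fin f] by (simp add: P_def)
  ultimately have "k * card V + 1 \<le> \<Delta> * weight V f + k * weight V f"
    by (simp only: add_mult_distrib2)
  then show ?thesis by (simp add: \<Delta>_def add_mult_distrib)
qed

lemma TkRDF_all_colours:
  assumes "no_isolated V A"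
  shows "TkRDF k V A (\<lambda>v. if v \<in> V then {1..k} else {})"
  using assms by (auto simp: TkRDF_def kRDF_def no_isolated_def isolated_in_def)

lemma finite_TkRDF_weights: "finite {weight V f | f. TkRDF k V A f}"
proof (rule finite_subset)
  show "{weight V f | f. TkRDF k V A f} \<subseteq> {..k * card V}"
    using kRDF_weight_le by (auto simp: TkRDF_def)
qed simp

lemma gamma_trk_le_weight:
  assumes "TkRDF k V A f"
  shows "gamma_trk k V A \<le> weight V f"
  unfolding gamma_trk_def using assms by (intro Min_le[OF finite_TkRDF_weights]) blast

lemma gamma_trk_attained:
  assumes "no_isolated V A"
  obtains f where "TkRDF k V A f" and "gamma_trk k V A = weight V f"
proof -
  have "{weight V f | f. TkRDF k V A f} \<noteq> {}"
    using TkRDF_all_colours[OF assms] by blast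
  then have "gamma_trk k V A \<in> {weight V f | f. TkRDF k V A f}"
    unfolding gamma_trk_def using finite_TkRDF_weights by (intro Min_in)
  then show ?thesis using that by blast
qed

lemma gamma_trk_lower_bound:
  assumes "k > 0" and "digraph V A" and "V \<noteq> {}" and "no_isolated V A"
  shows "k * card V + 1 \<le> (max_out_degree V A + k) * gamma_trk k V A"
proof -
  obtain f where "TkRDF k V A f" and "gamma_trk k V A = weight V f"
    using gamma_trk_attained[OF assms(4)] .
  then show ?thesis using TkRDF_weight_lower_bound[OF assms(1-3)] by simp
qed

lemma ceiling_divide_le_of_nat:
  fixes a c w :: nat
  assumes "0 < c" and "a \<le> c * w"
  shows "\<lceil>real a / real c\<rceil> \<le> int w"
proof -
  have "real a \<le> real w * real c"
    using assms(2) by (metis mult.commute of_nat_le_iff of_nat_mult)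
  then have "real a / real c \<le> real w"
    using assms(1) by (simp add: pos_divide_le_eq)
  then show ?thesis by (simp add: ceiling_le_iff)
qed

lemma two_cycle_digraph: "digraph {0, 1::nat} {(0, 1), (1, 0)}"
  by (auto simp: digraph_def)

lemma two_cycle_no_isolated: "no_isolated {0, 1::nat} {(0, 1), (1, 0)}"
  by (auto simp: no_isolated_def isolated_in_def)

lemma two_cycle_max_out_degree: "max_out_degree {0, 1::nat} {(0, 1), (1, 0)} = 1"
proof -
  have "out_degree {(0, 1), (1, 0::nat)} v = 1" if "v \<in> {0, 1}" for v
  proof -
    have "{w. (v, w) \<in> {(0, 1), (1, 0)}} = {1 - v}" using that by auto
    then show ?thesis by (simp add: out_degree_def)
  qed
  then have "out_degree {(0, 1), (1, 0::nat)} ` {0, 1} = {1}" by auto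
  then show ?thesis by (simp add: max_out_degree_def)
qed

lemma two_cycle_gamma_trk:
  assumes "k > 0"
  shows "gamma_trk k {0, 1::nat} {(0, 1), (1, 0)} = 2"
proof (rule antisym)
  let ?V = "{0, 1::nat}" and ?A = "{(0, 1), (1, 0::nat)}"
  have "TkRDF k ?V ?A (\<lambda>v. if v \<in> ?V then {1} else {})"
    using assms by (auto simp: TkRDF_def kRDF_def no_isolated_def isolated_in_def)
  from gamma_trk_le_weight[OF this] show "gamma_trk k ?V ?A \<le> 2"
    by (simp add: weight_def)
  have "2 * k + 1 \<le> (1 + k) * gamma_trk k ?V ?A"
    using gamma_trk_lower_bound[OF assms two_cycle_digraph _ two_cycle_no_isolated]
    unfolding two_cycle_max_out_degree by (simp add: mult.commute)
  then show "2 \<le> gamma_trk k ?V ?A"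
  proof (rule contrapos_pp)
    assume "\<not> 2 \<le> gamma_trk k ?V ?A"
    then have "(1 + k) * gamma_trk k ?V ?A \<le> (1 + k) * 1" by (intro mult_le_mono2) simp
    then show "\<not> 2 * k + 1 \<le> (1 + k) * gamma_trk k ?V ?A" using assms by simp
  qed
qed

theorem theorem3p6:
  fixes k :: nat and V :: "'a set" and A :: "('a \<times> 'a) set"
  assumes "k > 0" and "digraph V A" and "V \<noteq> {}" and "no_isolated V A"
  shows "of_int \<lceil>(real k * real (card V) + 1) / (real (max_out_degree V A) + real k)\<rceil>
           \<le> int (gamma_trk k V A)
     \<and> (\<exists>(V' :: nat set) A'. digraph V' A' \<and> V' \<noteq> {} \<and> no_isolated V' A' \<and>
          int (gamma_trk k V' A') =
            \<lceil>(real k * real (card V') + 1) / (real (max_out_degree V' A') + real k)\<rceil>)"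
proof
  have "\<lceil>real (k * card V + 1) / real (max_out_degree V A + k)\<rceil> \<le> int (gamma_trk k V A)"
    using assms(1) gamma_trk_lower_bound[OF assms] by (intro ceiling_divide_le_of_nat) simp_all
  then show "of_int \<lceil>(real k * real (card V) + 1) / (real (max_out_degree V A) + real k)\<rceil>
               \<le> int (gamma_trk k V A)"
    by (simp add: add.commute)
  have "\<lceil>(real k * 2 + 1) / (1 + real k)\<rceil> = 2"
    using assms(1) by (simp add: ceiling_eq_iff field_simps)
  then show "\<exists>(V' :: nat set) A'. digraph V' A' \<and> V' \<noteq> {} \<and> no_isolated V' A' \<and>
      int (gamma_trk k V' A') =
        \<lceil>(real k * real (card V') + 1) / (real (max_out_degree V' A') + real k)\<rceil>"
    using two_cycle_digraph two_cycle_no_isolated two_cycle_max_out_degree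
      two_cycle_gamma_trk[OF assms(1)]
    by (intro exI[of _ "{0, 1}"] exI[of _ "{(0, 1), (1, 0)}"]) simp
qed

end
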